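(* Let $\gamma\le0\le\beta\le\alpha$ be real with $\alpha+\beta+\gamma=0$, and let $t,\tau\in\mathbb R$ with $X=t+\tau\ge Y=t-\tau$. Let $$G_\tau(s)=\frac{\pi^{-3s}\prod_{\pm}\Gamma\big(\tfrac{s\pm i\tau-i\alpha}{2}\big)\Gamma\big(\tfrac{s\pm i\tau-i\beta}{2}\big)\Gamma\big(\tfrac{s\pm i\tau-i\gamma}{2}\big)}{\pi^{-\frac32+i\alpha-i\gamma}\Gamma\big(\tfrac{1+i\gamma-i\beta}{2}\big)\Gamma\big(\tfrac{1+i\beta-i\alpha}{2}\big)\Gamma\big(\tfrac{1+i\gamma-i\alpha}{2}\big)}.$$ (i) If $X_0\ge0$ and $X\notin[\beta-X_0,\alpha+X_0]$, then $\cosh(\pi\tau)|G_\tau(\frac12+it)|^2\ll\exp(-\pi X_0)$. (ii) If $Y_0\ge0$ and $Y\notin[\gamma-Y_0,\beta+Y_0]$, then $\cosh(\pi\tau)|G_\tau(\frac12+it)|^2\ll\exp(-\pi Y_0)$. (iii) If $\beta-X_0\le X\le\alpha+X_0$ and $\gamma-Y_0\le Y\le\beta+Y_0$, then $\cosh(\pi\tau)|G_\tau(\frac12+it)|^2\ll q_F(t,\tau)^{-1/2}$, where $q_F(t,\tau)=q_F(X)q_F(Y)$ and $q_F(Z)=(1+|Z-\alpha|)(1+|Z-\beta|)(1+|Z-\gamma|)$. All implied constants are absolute. *)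

theory Defs
  imports "HOL-Analysis.Analysis"
begin

definition Gamma_pm :: "real \<Rightarrow> real \<Rightarrow> complex \<Rightarrow> complex" where
  "Gamma_pm \<tau> \<mu> s = Gamma ((s + \<i> * of_real \<tau> - \<i> * of_real \<mu>) / 2) *
                       Gamma ((s - \<i> * of_real \<tau> - \<i> * of_real \<mu>) / 2)"

definition G_tau :: "real \<Rightarrow> real \<Rightarrow> real \<Rightarrow> real \<Rightarrow> complex \<Rightarrow> complex" where
  "G_tau \<alpha> \<beta> \<gamma> \<tau> s =
     ((complex_of_real pi) powr (-3 * s) *
        Gamma_pm \<tau> \<alpha> s * Gamma_pm \<tau> \<beta> s * Gamma_pm \<tau> \<gamma> s)
   / ((complex_of_real pi) powr (- 3 / 2 + \<i> * of_real \<alpha> - \<i> * of_real \<gamma>) *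
        Gamma ((1 + \<i> * of_real \<gamma> - \<i> * of_real \<beta>) / 2) *
        Gamma ((1 + \<i> * of_real \<beta> - \<i> * of_real \<alpha>) / 2) *
        Gamma ((1 + \<i> * of_real \<gamma> - \<i> * of_real \<alpha>) / 2))"

definition qF1 :: "real \<Rightarrow> real \<Rightarrow> real \<Rightarrow> real \<Rightarrow> real" where
  "qF1 \<alpha> \<beta> \<gamma> Z = (1 + \<bar>Z - \<alpha>\<bar>) * (1 + \<bar>Z - \<beta>\<bar>) * (1 + \<bar>Z - \<gamma>\<bar>)"

end

theory Submission
  imports Defs
begin

text \<open>
  On the line Re s = 1/2 every numerator factor of G_\<tau> is \<Gamma>(1/4 + iy) with y = (X - \<mu>)/2 or
  y = (Y - \<mu>)/2, and every denominator factor is \<Gamma>(1/2 + iw). The reflection formula gives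
  1/|\<Gamma>(1/2 + iw)|^2 \<le> exp(\<pi>|w|)/\<pi> and |\<Gamma>(1/4 + iy) \<Gamma>(3/4 + iy)| \<le> 2\<pi> exp(-\<pi>|y|), while
  comparing the Gauss products of \<Gamma>(1/4 + iy) and \<Gamma>(3/4 + iy) bounds the fourth power of their
  ratio by 810/(1 + y^2). Hence |\<Gamma>(1/4 + iy)|^2 \<le> 17\<pi> exp(-\<pi>|y|) / sqrt(1 + 2|y|), and
  multiplying the nine factors bounds cosh(\<pi>\<tau>) |G_\<tau>(1/2 + it)|^2 by
  17^6 \<pi>^3 exp(\<pi>E) / sqrt(q_F(X) q_F(Y)). When \<gamma> \<le> \<beta> \<le> \<alpha> and \<alpha> + \<beta> + \<gamma> = 0, the exponent E
  is at most minus the sum of the distances of X from [\<beta>, \<alpha>] and of Y from [\<gamma>, \<beta>], which gives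
  all three estimates.
\<close>

lemma cosh_le_exp_abs: "cosh x \<le> exp \<bar>x\<bar>" for x :: real
  by (cases "x \<ge> 0") (auto simp: cosh_field_def)

lemma exp_abs_le_two_cosh: "exp \<bar>x\<bar> \<le> 2 * cosh x" for x :: real
  by (cases "x \<ge> 0") (auto simp: cosh_field_def)

lemma norm_sin_pi_Complex_squared:
  "norm (sin (of_real pi * Complex x y))^2 = (cosh (2 * pi * y) - cos (2 * pi * x)) / 2"
  using norm_sin_squared[of "of_real pi * Complex x y"]
  by (simp add: cosh_field_def exp_minus field_simps)

lemma norm_Gamma_reflection:
  fixes z :: complex
  shows "norm (Gamma z) * norm (Gamma (1 - cnj z)) = pi / norm (sin (of_real pi * z))"
proof -
  have "norm (Gamma (1 - cnj z)) = norm (Gamma (1 - z))"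
    by (metis cnj_Gamma complex_cnj_diff complex_cnj_one complex_mod_cnj)
  then show ?thesis
    using Gamma_reflection_complex[of z] by (simp add: norm_divide norm_mult flip: norm_mult)
qed

lemma norm_Gamma_quarter_product_bound:
  "(norm (Gamma (Complex (1/4) y)) * norm (Gamma (Complex (3/4) y)))^2
     \<le> 4 * pi^2 * exp (- 2 * pi * \<bar>y\<bar>)"
proof -
  let ?s = "norm (sin (of_real pi * Complex (1/4) y))^2"
  have s: "exp (2 * pi * \<bar>y\<bar>) / 4 \<le> ?s"
    using exp_abs_le_two_cosh[of "2 * pi * y"] by (simp add: norm_sin_pi_Complex_squared abs_mult)
  have "1 - cnj (Complex (1/4) y) = Complex (3/4) y"
    by (simp add: complex_eq_iff)
  then have "(norm (Gamma (Complex (1/4) y)) * norm (Gamma (Complex (3/4) y)))^2 = pi^2 / ?s"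
    using norm_Gamma_reflection[of "Complex (1/4) y"] by (simp add: power_divide)
  also have "\<dots> \<le> pi^2 / (exp (2 * pi * \<bar>y\<bar>) / 4)"
    using s order_less_le_trans[OF _ s] by (intro divide_left_mono) (auto simp: zero_less_mult_iff)
  also have "\<dots> = 4 * pi^2 * exp (- 2 * pi * \<bar>y\<bar>)"
    by (simp add: exp_minus field_simps)
  finally show ?thesis .
qed

lemma inverse_norm_Gamma_half_bound:
  "1 / norm (Gamma (Complex (1/2) w))^2 \<le> exp (pi * \<bar>w\<bar>) / pi"
proof -
  let ?s = "norm (sin (of_real pi * Complex (1/2) w))"
  have "cosh (2 * pi * w) \<le> exp (pi * \<bar>w\<bar>)^2"
    using cosh_le_exp_abs[of "2 * pi * w"] by (simp add: abs_mult mult.assoc flip: exp_double)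
  moreover have "1 \<le> exp (pi * \<bar>w\<bar>)^2"
    by simp
  moreover have "?s^2 = (cosh (2 * pi * w) + 1) / 2"
    by (simp add: norm_sin_pi_Complex_squared)
  ultimately have "?s^2 \<le> exp (pi * \<bar>w\<bar>)^2"
    by argo
  then have "?s \<le> exp (pi * \<bar>w\<bar>)"
    by (rule power2_le_imp_le) simp
  moreover have "1 - cnj (Complex (1/2) w) = Complex (1/2) w"
    by (simp add: complex_eq_iff)
  then have "norm (Gamma (Complex (1/2) w))^2 = pi / ?s"
    using norm_Gamma_reflection[of "Complex (1/2) w"] by (simp add: power2_eq_square)
  ultimately show ?thesis
    by (simp add: divide_right_mono)
qed

lemma Complex_notin_nonpos_Ints: "0 < x \<Longrightarrow> Complex x y \<notin> \<int>\<^sub>\<le>\<^sub>0"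
  using nonpos_Ints_subset_nonpos_Reals complex_nonpos_Reals_iff by fastforce

lemma norm_pochhammer_squared:
  fixes z :: complex
  shows "norm (pochhammer z m)^2 = (\<Prod>k<m. (Re z + real k)^2 + (Im z)^2)"
proof -
  have "norm (pochhammer z m) = (\<Prod>k<m. norm (z + of_nat k))"
    by (simp add: pochhammer_prod prod_norm lessThan_atLeast0)
  then have "norm (pochhammer z m)^2 = (\<Prod>k<m. norm (z + of_nat k)^2)"
    by (simp add: prod_power_distrib)
  also have "\<dots> = (\<Prod>k<m. (Re z + real k)^2 + (Im z)^2)"
    by (simp add: cmod_power2)
  finally show ?thesis .
qed

lemma norm_Gamma_series:
  fixes z :: complex
  assumes "n > 0"
  shows "norm (Gamma_series z n) = fact n * real n powr Re z / norm (pochhammer z (Suc n))"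
  using assms by (simp add: Gamma_series_def norm_divide norm_mult powr_def)

text \<open>After the substitution \<open>k = m + 1\<close> the difference of the two sides is a polynomial
  in \<open>m, u \<ge> 0\<close> with positive coefficients.\<close>
lemma quarter_product_step:
  fixes k u :: real
  assumes "k \<ge> 1" "u \<ge> 0"
  shows "((k + 3/4)^2 + u)^2 * (k^2 + u) * (k * (k + 2)) \<le> ((k + 1/4)^2 + u)^2 * ((k + 1)^2 + u) * (k + 1)^2"
proof -
  define m where "m = k - 1"
  have m: "m \<ge> 0" "k = m + 1"
    using assms by (auto simp: m_def)
  have "((k + 1/4)^2 + u)^2 * ((k + 1)^2 + u) * (k + 1)^2 - ((k + 3/4)^2 + u)^2 * (k^2 + u) * (k * (k + 2))
     = 2797/256 + 3393/256*u + 57/8*u^2 + u^3 + 5763/128*m + 591/16*m*u + 9*m*u^2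
       + 4899/64*m^2 + 615/16*m^2*u + 3*m^2*u^2 + 8801/128*m^3 + 141/8*m^3*u
       + 551/16*m^4 + 3*m^4*u + 73/8*m^5 + m^6"
    unfolding m(2) by (simp add: eval_nat_numeral field_simps)
  also have "\<dots> \<ge> 0"
    using m(1) assms(2) by (intro add_nonneg_nonneg mult_nonneg_nonneg zero_le_power) auto
  finally show ?thesis
    by simp
qed

text \<open>The slack factor \<open>(n + 2) / (n + 1)\<close> is what makes the induction work: without it
  the inductive step is false, e.g. for \<open>k = u = 1\<close>.\<close>
lemma quarter_products_bound:
  fixes u :: real
  assumes u: "u \<ge> 0"
  shows "(\<Prod>k<Suc n. (real k + 3/4)^2 + u)^2 * (1 + u) * (real n + 2)
     \<le> 162 * (real n + 1) * ((real n + 1)^2 + u) * (\<Prod>k<Suc n. (real k + 1/4)^2 + u)^2"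
proof (induction n)
  case 0
  have "(9/16 + u)^2 \<le> (9 * (1/16 + u))^2"
    using u by (intro power_mono) auto
  also have "\<dots> = 81 * (1/16 + u)^2"
    by (simp only: power_mult_distrib) simp
  finally have "(9/16 + u)^2 \<le> 81 * (1/16 + u)^2" .
  then have "(9/16 + u)^2 * (2 * (1 + u)) \<le> 81 * (1/16 + u)^2 * (2 * (1 + u))"
    using u by (intro mult_right_mono) auto
  then show ?case
    by (simp add: algebra_simps power_divide)
next
  case (Suc n)
  define N where "N = (\<Prod>k<Suc n. (real k + 3/4)^2 + u)"
  define D where "D = (\<Prod>k<Suc n. (real k + 1/4)^2 + u)"
  define a where "a = (real n + 1 + 3/4)^2 + u"
  define b where "b = (real n + 1 + 1/4)^2 + u"
  have IH: "N^2 * (1 + u) * (real n + 2) \<le> 162 * (real n + 1) * ((real n + 1)^2 + u) * D^2"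
    using Suc.IH unfolding N_def D_def .
  have step: "a^2 * ((real n + 1)^2 + u) * ((real n + 1) * (real n + 3))
      \<le> b^2 * ((real n + 2)^2 + u) * (real n + 2)^2"
    using quarter_product_step[of "real n + 1" u] u unfolding a_def b_def by (simp add: algebra_simps)
  let ?w = "(real n + 2) * (real n + 1) * ((real n + 1)^2 + u)"
  have "((N * a)^2 * (1 + u) * (real n + 3)) * ?w
      = (N^2 * (1 + u) * (real n + 2)) * (a^2 * (real n + 3) * (real n + 1) * ((real n + 1)^2 + u))"
    by (simp add: algebra_simps power2_eq_square)
  also have "\<dots> \<le> (162 * (real n + 1) * ((real n + 1)^2 + u) * D^2) * (a^2 * (real n + 3) * (real n + 1) * ((real n + 1)^2 + u))"
    using IH u by (intro mult_right_mono) auto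
  also have "\<dots> = (162 * (real n + 1) * D^2 * ((real n + 1)^2 + u)) * (a^2 * ((real n + 1)^2 + u) * ((real n + 1) * (real n + 3)))"
    by (simp add: algebra_simps)
  also have "\<dots> \<le> (162 * (real n + 1) * D^2 * ((real n + 1)^2 + u)) * (b^2 * ((real n + 2)^2 + u) * (real n + 2)^2)"
    using step u by (intro mult_left_mono) auto
  also have "\<dots> = (162 * (real n + 2) * ((real n + 2)^2 + u) * (D * b)^2) * ?w"
    by (simp add: algebra_simps power2_eq_square)
  finally have "(N * a)^2 * (1 + u) * (real n + 3) \<le> 162 * (real n + 2) * ((real n + 2)^2 + u) * (D * b)^2"
    using u by (elim mult_right_le_imp_le) (simp add: add_pos_nonneg)
  then show ?case
    by (simp add: N_def D_def a_def b_def algebra_simps)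
qed

lemma Gamma_series_quarter_ratio_power4:
  assumes "n > 0"
  shows "(norm (Gamma_series (Complex (1/4) y) n) / norm (Gamma_series (Complex (3/4) y) n))^4
    = (\<Prod>k<Suc n. (real k + 3/4)^2 + y^2)^2 / ((\<Prod>k<Suc n. (real k + 1/4)^2 + y^2)^2 * real n^2)"
proof -
  have "(real n powr (1/4))^4 = real n" "(real n powr (3/4))^4 = real n^3"
    using assms by (simp_all add: powr_power)
  moreover have "norm (pochhammer (Complex x y) (Suc n))^4 = (\<Prod>k<Suc n. (real k + x)^2 + y^2)^2" for x
  proof -
    have "norm (pochhammer (Complex x y) (Suc n))^4 = (norm (pochhammer (Complex x y) (Suc n))^2)^2"
      by (simp flip: power_mult)
    then show ?thesis
      by (simp only: norm_pochhammer_squared) (simp add: add.commute)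
  qed
  ultimately show ?thesis
    using assms by (simp add: norm_Gamma_series power_divide power_mult_distrib power2_eq_square power3_eq_cube mult_ac)
qed

lemma Gamma_series_quarter_ratio_bound:
  assumes n: "1 \<le> n" "y^2 \<le> real n"
  shows "(norm (Gamma_series (Complex (1/4) y) n) / norm (Gamma_series (Complex (3/4) y) n))^4
    \<le> 810 / (1 + y^2)"
proof -
  define u where "u = y^2"
  define N where "N = (\<Prod>k<Suc n. (real k + 3/4)^2 + u)"
  define D where "D = (\<Prod>k<Suc n. (real k + 1/4)^2 + u)"
  have u: "u \<ge> 0"
    by (simp add: u_def)
  have "D > 0"
    unfolding D_def using u by (intro prod_pos) (auto intro: add_pos_nonneg)
  have "N^2 * (1 + u) * (real n + 2) \<le> 162 * (real n + 1) * ((real n + 1)^2 + u) * D^2"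
    using quarter_products_bound[OF u, of n] unfolding N_def D_def .
  also have "\<dots> \<le> 162 * (real n + 2) * ((real n + 1)^2 + u) * D^2"
    using u by (intro mult_right_mono mult_left_mono) auto
  finally have "(N^2 * (1 + u)) * (real n + 2) \<le> (162 * ((real n + 1)^2 + u) * D^2) * (real n + 2)"
    by (simp only: ac_simps)
  then have "N^2 * (1 + u) \<le> 162 * ((real n + 1)^2 + u) * D^2"
    by (rule mult_right_le_imp_le) simp
  also have "\<dots> \<le> 162 * (5 * real n^2) * D^2"
  proof -
    have "1 \<le> real n" "real n \<le> real n^2"
      using n(1) mult_left_mono[of 1 "real n" "real n"] by (simp_all add: power2_eq_square)
    moreover have "(real n + 1)^2 = real n^2 + 2 * real n + 1"
      by (simp add: power2_eq_square algebra_simps)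
    ultimately have "(real n + 1)^2 + u \<le> 5 * real n^2"
      using n(2) unfolding u_def by linarith
    then show ?thesis
      by (intro mult_right_mono mult_left_mono) auto
  qed
  finally have "N^2 * (1 + u) \<le> 810 * (D^2 * real n^2)"
    by (simp add: ac_simps)
  moreover have ratio: "(norm (Gamma_series (Complex (1/4) y) n) / norm (Gamma_series (Complex (3/4) y) n))^4
      = N^2 / (D^2 * real n^2)"
    unfolding N_def D_def u_def by (rule Gamma_series_quarter_ratio_power4) (use n in simp)
  ultimately show ?thesis
    unfolding ratio u_def[symmetric] using \<open>D > 0\<close> n u by (simp add: divide_simps)
qed

lemma norm_Gamma_quarter_ratio_bound:
  "(norm (Gamma (Complex (1/4) y)) / norm (Gamma (Complex (3/4) y)))^4 \<le> 810 / (1 + y^2)"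
proof -
  have "Gamma (Complex (3/4) y) \<noteq> 0"
    by (simp add: Gamma_nonzero Complex_notin_nonpos_Ints)
  then have "(\<lambda>n. (norm (Gamma_series (Complex (1/4) y) n) / norm (Gamma_series (Complex (3/4) y) n))^4)
      \<longlonglongrightarrow> (norm (Gamma (Complex (1/4) y)) / norm (Gamma (Complex (3/4) y)))^4"
    by (intro tendsto_intros) auto
  moreover have "eventually (\<lambda>n. (norm (Gamma_series (Complex (1/4) y) n)
      / norm (Gamma_series (Complex (3/4) y) n))^4 \<le> 810 / (1 + y^2)) sequentially"
    using eventually_ge_at_top[of "max 1 (nat \<lceil>y^2\<rceil>)"]
    by eventually_elim (intro Gamma_series_quarter_ratio_bound; linarith)
  ultimately show ?thesis
    by (rule tendsto_upperbound) simp
qed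

lemma norm_Gamma_quarter_bound:
  "norm (Gamma (Complex (1/4) y))^2 \<le> 17 * pi * exp (- pi * \<bar>y\<bar>) / sqrt (1 + 2 * \<bar>y\<bar>)"
proof -
  define a where "a = norm (Gamma (Complex (1/4) y))"
  define b where "b = norm (Gamma (Complex (3/4) y))"
  define e where "e = exp (- pi * \<bar>y\<bar>)"
  define q where "q = 1 + 2 * \<bar>y\<bar>"
  have q: "q \<ge> 1"
    by (simp add: q_def)
  have "b > 0"
    by (simp add: b_def Gamma_nonzero Complex_notin_nonpos_Ints)
  have product: "((a * b)^2)^2 \<le> (4 * pi^2 * e^2)^2"
    using norm_Gamma_quarter_product_bound[of y]
    by (intro power_mono) (simp_all add: a_def b_def e_def mult.assoc flip: exp_double)
  have "q^2 \<le> 6 * (1 + y^2)"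
    using sum_squares_ge_zero[of "\<bar>y\<bar> - 1" 0] by (simp add: q_def power2_eq_square algebra_simps)
  then have "810 / (1 + y^2) \<le> 4860 / q^2"
    using q by (simp add: field_simps add_pos_nonneg)
  then have ratio: "(a / b)^4 \<le> 4860 / q^2"
    using norm_Gamma_quarter_ratio_bound[of y] unfolding a_def b_def by linarith
  have "(a^2)^4 = ((a * b)^2)^2 * (a / b)^4"
    using \<open>b > 0\<close> by (simp add: field_simps flip: power_mult)
  also have "\<dots> \<le> (4 * pi^2 * e^2)^2 * (4860 / q^2)"
    using product ratio by (intro mult_mono) auto
  also have "\<dots> = (17 * pi * e / sqrt q)^4 * (77760 / 83521)"
  proof -
    have "sqrt q ^ 4 = (sqrt q ^ 2)^2"
      by (simp flip: power_mult)
    then show ?thesis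
      using q by (simp add: field_simps power_mult_distrib power_divide flip: power_mult)
  qed
  also have "\<dots> \<le> (17 * pi * e / sqrt q)^4"
    by simp
  finally have "(a^2)^4 \<le> (17 * pi * e / sqrt q)^4" .
  then have "a^2 \<le> 17 * pi * e / sqrt q"
    using power_le_imp_le_base[of "a^2" 3] q by (simp add: e_def eval_nat_numeral)
  then show ?thesis
    by (simp add: a_def e_def q_def)
qed

lemma norm_Gamma_quarter_bound':
  "norm (Gamma (Complex (1/4) ((Z - \<mu>) / 2)))^2
     \<le> 17 * pi * exp (- pi * \<bar>Z - \<mu>\<bar> / 2) / sqrt (1 + \<bar>Z - \<mu>\<bar>)"
  using norm_Gamma_quarter_bound[of "(Z - \<mu>) / 2"] by simp

lemma inverse_norm_Gamma_half_bound':
  "1 / norm (Gamma (Complex (1/2) ((a - b) / 2)))^2 \<le> exp (pi * \<bar>a - b\<bar> / 2) / pi"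
  using inverse_norm_Gamma_half_bound[of "(a - b) / 2"] by simp

definition dev_sum :: "real \<Rightarrow> real \<Rightarrow> real \<Rightarrow> real \<Rightarrow> real" where
  "dev_sum \<alpha> \<beta> \<gamma> Z = \<bar>Z - \<alpha>\<bar> + \<bar>Z - \<beta>\<bar> + \<bar>Z - \<gamma>\<bar>"

lemma norm_G_tau_critical_line_squared:
  "norm (G_tau \<alpha> \<beta> \<gamma> \<tau> (1/2 + \<i> * of_real t))^2 =
     (norm (Gamma (Complex (1/4) ((t + \<tau> - \<alpha>) / 2)))^2 * norm (Gamma (Complex (1/4) ((t - \<tau> - \<alpha>) / 2)))^2 *
      norm (Gamma (Complex (1/4) ((t + \<tau> - \<beta>) / 2)))^2 * norm (Gamma (Complex (1/4) ((t - \<tau> - \<beta>) / 2)))^2 *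
      norm (Gamma (Complex (1/4) ((t + \<tau> - \<gamma>) / 2)))^2 * norm (Gamma (Complex (1/4) ((t - \<tau> - \<gamma>) / 2)))^2) *
     (1 / norm (Gamma (Complex (1/2) ((\<gamma> - \<beta>) / 2)))^2 * (1 / norm (Gamma (Complex (1/2) ((\<beta> - \<alpha>) / 2)))^2) *
      (1 / norm (Gamma (Complex (1/2) ((\<gamma> - \<alpha>) / 2)))^2))"
proof -
  have args: "((1/2 + \<i> * of_real t) + \<i> * of_real \<tau> - \<i> * of_real \<mu>) / 2 = Complex (1/4) ((t + \<tau> - \<mu>) / 2)"
    "((1/2 + \<i> * of_real t) - \<i> * of_real \<tau> - \<i> * of_real \<mu>) / 2 = Complex (1/4) ((t - \<tau> - \<mu>) / 2)"
    "(1 + \<i> * of_real a - \<i> * of_real b) / 2 = Complex (1/2) ((a - b) / 2)" for \<mu> a b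
    by (simp_all add: complex_eq_iff)
  have "norm (complex_of_real pi powr (-3 * (1/2 + \<i> * of_real t))) = pi powr (-3/2)"
    "norm (complex_of_real pi powr (- 3 / 2 + \<i> * of_real \<alpha> - \<i> * of_real \<gamma>)) = pi powr (-3/2)"
    by (subst norm_powr_real_powr; simp)+
  then show ?thesis
    unfolding G_tau_def Gamma_pm_def args norm_divide norm_mult
    by (simp add: field_simps power_mult_distrib power_divide)
qed

lemma G_tau_critical_line_bound:
  "cosh (pi * \<tau>) * norm (G_tau \<alpha> \<beta> \<gamma> \<tau> (1/2 + \<i> * of_real t))^2 \<le>
    17^6 * pi^3 * exp (pi * (\<bar>\<tau>\<bar> + (\<bar>\<gamma> - \<beta>\<bar> + \<bar>\<beta> - \<alpha>\<bar> + \<bar>\<gamma> - \<alpha>\<bar>) / 2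
        - (dev_sum \<alpha> \<beta> \<gamma> (t + \<tau>) + dev_sum \<alpha> \<beta> \<gamma> (t - \<tau>)) / 2))
    / sqrt (qF1 \<alpha> \<beta> \<gamma> (t + \<tau>) * qF1 \<alpha> \<beta> \<gamma> (t - \<tau>))"
proof -
  let ?f = "\<lambda>Z \<mu>. 17 * pi * exp (- pi * \<bar>Z - \<mu>\<bar> / 2) / sqrt (1 + \<bar>Z - \<mu>\<bar>)"
  let ?h = "\<lambda>a b. exp (pi * \<bar>a - b\<bar> / 2) / pi"
  have "cosh (pi * \<tau>) * norm (G_tau \<alpha> \<beta> \<gamma> \<tau> (1/2 + \<i> * of_real t))^2 \<le> exp (pi * \<bar>\<tau>\<bar>) *
     ((?f (t + \<tau>) \<alpha> * ?f (t - \<tau>) \<alpha> * ?f (t + \<tau>) \<beta> * ?f (t - \<tau>) \<beta> * ?f (t + \<tau>) \<gamma> * ?f (t - \<tau>) \<gamma>) *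
     (?h \<gamma> \<beta> * ?h \<beta> \<alpha> * ?h \<gamma> \<alpha>))"
    unfolding norm_G_tau_critical_line_squared
    using cosh_le_exp_abs[of "pi * \<tau>"]
    by (intro mult_mono norm_Gamma_quarter_bound' inverse_norm_Gamma_half_bound' mult_nonneg_nonneg
        divide_nonneg_nonneg) (auto simp: abs_mult)
  also have "\<dots> = 17^6 * pi^3 * exp (pi * (\<bar>\<tau>\<bar> + (\<bar>\<gamma> - \<beta>\<bar> + \<bar>\<beta> - \<alpha>\<bar> + \<bar>\<gamma> - \<alpha>\<bar>) / 2
        - (dev_sum \<alpha> \<beta> \<gamma> (t + \<tau>) + dev_sum \<alpha> \<beta> \<gamma> (t - \<tau>)) / 2))
    / sqrt (qF1 \<alpha> \<beta> \<gamma> (t + \<tau>) * qF1 \<alpha> \<beta> \<gamma> (t - \<tau>))"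
    unfolding dev_sum_def qF1_def real_sqrt_mult
    by (simp add: field_simps power3_eq_cube flip: exp_add)
  finally show ?thesis .
qed

definition interval_gap :: "real \<Rightarrow> real \<Rightarrow> real \<Rightarrow> real" where
  "interval_gap a b Z = max 0 (max (a - Z) (Z - b))"

lemma interval_gap_nonneg: "0 \<le> interval_gap a b Z"
  by (simp add: interval_gap_def)

lemma interval_gap_ge_of_notin: "Z \<notin> {a - r..b + r} \<Longrightarrow> r \<le> interval_gap a b Z"
  by (auto simp: interval_gap_def)

lemma dev_sum_minus_ge:
  assumes "\<gamma> \<le> \<beta>" "\<beta> \<le> \<alpha>" "\<alpha> + \<beta> + \<gamma> = 0"
  shows "2 * \<alpha> + 2 * interval_gap \<beta> \<alpha> Z \<le> dev_sum \<alpha> \<beta> \<gamma> Z - Z"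
  using assms by (auto simp: dev_sum_def interval_gap_def abs_if)

lemma dev_sum_plus_ge:
  assumes "\<gamma> \<le> \<beta>" "\<beta> \<le> \<alpha>" "\<alpha> + \<beta> + \<gamma> = 0"
  shows "2 * interval_gap \<gamma> \<beta> Z - 2 * \<gamma> \<le> dev_sum \<alpha> \<beta> \<gamma> Z + Z"
  using assms by (auto simp: dev_sum_def interval_gap_def abs_if)

lemma qF1_ge_one: "1 \<le> qF1 \<alpha> \<beta> \<gamma> Z"
proof -
  have "1 * 1 * 1 \<le> (1 + \<bar>Z - \<alpha>\<bar>) * (1 + \<bar>Z - \<beta>\<bar>) * (1 + \<bar>Z - \<gamma>\<bar>)"
    by (intro mult_mono) auto
  then show ?thesis
    by (simp add: qF1_def)
qed

lemma qF1_product_ge_one: "1 \<le> qF1 \<alpha> \<beta> \<gamma> X * qF1 \<alpha> \<beta> \<gamma> Y"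
  using qF1_ge_one[of \<alpha> \<beta> \<gamma> X] qF1_ge_one[of \<alpha> \<beta> \<gamma> Y] by (metis mult_mono' mult_1 zero_le_one)

lemma G_tau_gap_bound:
  assumes "\<gamma> \<le> \<beta>" "\<beta> \<le> \<alpha>" "\<alpha> + \<beta> + \<gamma> = 0" "0 \<le> \<tau>"
  shows "cosh (pi * \<tau>) * norm (G_tau \<alpha> \<beta> \<gamma> \<tau> (1/2 + \<i> * of_real t))^2 \<le>
    17^6 * pi^3 * exp (- pi * (interval_gap \<beta> \<alpha> (t + \<tau>) + interval_gap \<gamma> \<beta> (t - \<tau>)))
    / sqrt (qF1 \<alpha> \<beta> \<gamma> (t + \<tau>) * qF1 \<alpha> \<beta> \<gamma> (t - \<tau>))"
proof -
  let ?E = "\<bar>\<tau>\<bar> + (\<bar>\<gamma> - \<beta>\<bar> + \<bar>\<beta> - \<alpha>\<bar> + \<bar>\<gamma> - \<alpha>\<bar>) / 2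
    - (dev_sum \<alpha> \<beta> \<gamma> (t + \<tau>) + dev_sum \<alpha> \<beta> \<gamma> (t - \<tau>)) / 2"
  let ?G = "interval_gap \<beta> \<alpha> (t + \<tau>) + interval_gap \<gamma> \<beta> (t - \<tau>)"
  have "?E \<le> - ?G"
    using dev_sum_minus_ge[OF assms(1-3), of "t + \<tau>"] dev_sum_plus_ge[OF assms(1-3), of "t - \<tau>"] assms
    by simp argo
  then have "exp (pi * ?E) \<le> exp (- pi * ?G)"
    using mult_left_mono[of ?E "- ?G" pi] by (metis exp_le_cancel_iff mult_minus_left mult_minus_right pi_ge_zero)
  then have "17^6 * pi^3 * exp (pi * ?E) / sqrt (qF1 \<alpha> \<beta> \<gamma> (t + \<tau>) * qF1 \<alpha> \<beta> \<gamma> (t - \<tau>))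
    \<le> 17^6 * pi^3 * exp (- pi * ?G) / sqrt (qF1 \<alpha> \<beta> \<gamma> (t + \<tau>) * qF1 \<alpha> \<beta> \<gamma> (t - \<tau>))"
    using qF1_product_ge_one[of \<alpha> \<beta> \<gamma> "t + \<tau>" "t - \<tau>"]
    by (intro divide_right_mono mult_left_mono) auto
  with G_tau_critical_line_bound show ?thesis
    by (rule order_trans)
qed

lemma G_tau_decay_bound:
  assumes "\<gamma> \<le> \<beta>" "\<beta> \<le> \<alpha>" "\<alpha> + \<beta> + \<gamma> = 0" "0 \<le> \<tau>"
    and "A \<le> interval_gap \<beta> \<alpha> (t + \<tau>)" "B \<le> interval_gap \<gamma> \<beta> (t - \<tau>)"
  shows "cosh (pi * \<tau>) * norm (G_tau \<alpha> \<beta> \<gamma> \<tau> (1/2 + \<i> * of_real t))^2 \<le> 17^6 * pi^3 * exp (- pi * (A + B))"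
proof -
  let ?G = "interval_gap \<beta> \<alpha> (t + \<tau>) + interval_gap \<gamma> \<beta> (t - \<tau>)"
  let ?Q = "qF1 \<alpha> \<beta> \<gamma> (t + \<tau>) * qF1 \<alpha> \<beta> \<gamma> (t - \<tau>)"
  have "1 \<le> sqrt ?Q"
    using qF1_product_ge_one by simp
  have "cosh (pi * \<tau>) * norm (G_tau \<alpha> \<beta> \<gamma> \<tau> (1/2 + \<i> * of_real t))^2 \<le> 17^6 * pi^3 * exp (- pi * ?G) / sqrt ?Q"
    using assms(1-4) by (rule G_tau_gap_bound)
  also have "\<dots> \<le> 17^6 * pi^3 * exp (- pi * ?G)"
    using \<open>1 \<le> sqrt ?Q\<close> by (simp add: divide_le_eq mult_le_cancel_left1 mult_less_0_iff)
  also have "\<dots> \<le> 17^6 * pi^3 * exp (- pi * (A + B))"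
    using assms(5,6) by simp
  finally show ?thesis .
qed

lemma G_tau_qF_bound:
  assumes "\<gamma> \<le> \<beta>" "\<beta> \<le> \<alpha>" "\<alpha> + \<beta> + \<gamma> = 0" "0 \<le> \<tau>"
  shows "cosh (pi * \<tau>) * norm (G_tau \<alpha> \<beta> \<gamma> \<tau> (1/2 + \<i> * of_real t))^2
    \<le> 17^6 * pi^3 * (qF1 \<alpha> \<beta> \<gamma> (t + \<tau>) * qF1 \<alpha> \<beta> \<gamma> (t - \<tau>)) powr (-1/2)"
proof -
  let ?G = "interval_gap \<beta> \<alpha> (t + \<tau>) + interval_gap \<gamma> \<beta> (t - \<tau>)"
  let ?Q = "qF1 \<alpha> \<beta> \<gamma> (t + \<tau>) * qF1 \<alpha> \<beta> \<gamma> (t - \<tau>)"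
  have "1 \<le> ?Q"
    by (rule qF1_product_ge_one)
  have "cosh (pi * \<tau>) * norm (G_tau \<alpha> \<beta> \<gamma> \<tau> (1/2 + \<i> * of_real t))^2 \<le> 17^6 * pi^3 * exp (- pi * ?G) / sqrt ?Q"
    using assms by (rule G_tau_gap_bound)
  also have "\<dots> \<le> 17^6 * pi^3 * 1 / sqrt ?Q"
    using \<open>1 \<le> ?Q\<close> interval_gap_nonneg[of \<beta> \<alpha> "t + \<tau>"] interval_gap_nonneg[of \<gamma> \<beta> "t - \<tau>"]
    by (intro divide_right_mono mult_left_mono) auto
  also have "\<dots> = 17^6 * pi^3 * ?Q powr (-1/2)"
    using \<open>1 \<le> ?Q\<close> by (simp add: powr_minus_divide powr_half_sqrt)
  finally show ?thesis .
qed

theorem lemma6p2: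
  shows
  "(\<exists>C. \<forall>\<alpha> \<beta> \<gamma> t \<tau> X0. \<gamma> \<le> 0 \<and> 0 \<le> \<beta> \<and> \<beta> \<le> \<alpha> \<and> \<alpha> + \<beta> + \<gamma> = 0 \<and>
        t + \<tau> \<ge> t - \<tau> \<and> X0 \<ge> 0 \<and> t + \<tau> \<notin> {\<beta> - X0 .. \<alpha> + X0} \<longrightarrow>
        cosh (pi * \<tau>) * (cmod (G_tau \<alpha> \<beta> \<gamma> \<tau> (1/2 + \<i> * of_real t)))\<^sup>2 \<le> C * exp (- pi * X0))
   \<and> (\<exists>C. \<forall>\<alpha> \<beta> \<gamma> t \<tau> Y0. \<gamma> \<le> 0 \<and> 0 \<le> \<beta> \<and> \<beta> \<le> \<alpha> \<and> \<alpha> + \<beta> + \<gamma> = 0 \<and>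
        t + \<tau> \<ge> t - \<tau> \<and> Y0 \<ge> 0 \<and> t - \<tau> \<notin> {\<gamma> - Y0 .. \<beta> + Y0} \<longrightarrow>
        cosh (pi * \<tau>) * (cmod (G_tau \<alpha> \<beta> \<gamma> \<tau> (1/2 + \<i> * of_real t)))\<^sup>2 \<le> C * exp (- pi * Y0))
   \<and> (\<exists>C. \<forall>\<alpha> \<beta> \<gamma> t \<tau> X0 Y0. \<gamma> \<le> 0 \<and> 0 \<le> \<beta> \<and> \<beta> \<le> \<alpha> \<and> \<alpha> + \<beta> + \<gamma> = 0 \<and>
        t + \<tau> \<ge> t - \<tau> \<and> X0 \<ge> 0 \<and> Y0 \<ge> 0 \<and>
        \<beta> - X0 \<le> t + \<tau> \<and> t + \<tau> \<le> \<alpha> + X0 \<and> \<gamma> - Y0 \<le> t - \<tau> \<and> t - \<tau> \<le> \<beta> + Y0 \<longrightarrow>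
        cosh (pi * \<tau>) * (cmod (G_tau \<alpha> \<beta> \<gamma> \<tau> (1/2 + \<i> * of_real t)))\<^sup>2
          \<le> C * (qF1 \<alpha> \<beta> \<gamma> (t + \<tau>) * qF1 \<alpha> \<beta> \<gamma> (t - \<tau>)) powr (- 1 / 2))"
proof -
  let ?C = "17^6 * pi^3 :: real"
  have outside_X: "cosh (pi * \<tau>) * norm (G_tau \<alpha> \<beta> \<gamma> \<tau> (1/2 + \<i> * of_real t))^2 \<le> ?C * exp (- pi * X0)"
    if "\<gamma> \<le> 0" "0 \<le> \<beta>" "\<beta> \<le> \<alpha>" "\<alpha> + \<beta> + \<gamma> = 0" "t - \<tau> \<le> t + \<tau>" "t + \<tau> \<notin> {\<beta> - X0..\<alpha> + X0}"
    for \<alpha> \<beta> \<gamma> t \<tau> X0 :: real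
    using G_tau_decay_bound[of \<gamma> \<beta> \<alpha> \<tau> X0 t 0] that
    by (simp add: interval_gap_ge_of_notin interval_gap_nonneg)
  have outside_Y: "cosh (pi * \<tau>) * norm (G_tau \<alpha> \<beta> \<gamma> \<tau> (1/2 + \<i> * of_real t))^2 \<le> ?C * exp (- pi * Y0)"
    if "\<gamma> \<le> 0" "0 \<le> \<beta>" "\<beta> \<le> \<alpha>" "\<alpha> + \<beta> + \<gamma> = 0" "t - \<tau> \<le> t + \<tau>" "t - \<tau> \<notin> {\<gamma> - Y0..\<beta> + Y0}"
    for \<alpha> \<beta> \<gamma> t \<tau> Y0 :: real
    using G_tau_decay_bound[of \<gamma> \<beta> \<alpha> \<tau> 0 t Y0] that
    by (simp add: interval_gap_ge_of_notin interval_gap_nonneg)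
  have inside: "cosh (pi * \<tau>) * norm (G_tau \<alpha> \<beta> \<gamma> \<tau> (1/2 + \<i> * of_real t))^2
      \<le> ?C * (qF1 \<alpha> \<beta> \<gamma> (t + \<tau>) * qF1 \<alpha> \<beta> \<gamma> (t - \<tau>)) powr (-1/2)"
    if "\<gamma> \<le> 0" "0 \<le> \<beta>" "\<beta> \<le> \<alpha>" "\<alpha> + \<beta> + \<gamma> = 0" "t - \<tau> \<le> t + \<tau>"
    for \<alpha> \<beta> \<gamma> t \<tau> :: real
    using G_tau_qF_bound[of \<gamma> \<beta> \<alpha> \<tau> t] that by simp
  show ?thesis
    using outside_X outside_Y inside by blast
qed

end
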